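(* Let $G=(V,E,H)$ be a HEDG and $X,Y,Z,U\subseteq V$ with $U\cap(X\cup Y\cup Z)=\emptyset$. Then $X\perp^d_G Y\mid Z$ if and only if $X\perp^d_{G^{\mathrm{marg}\setminus U}}Y\mid Z$.
   Context: HEDG $G=(V,E,H)$: $V$ finite, $E\subseteq V\times V$ (self-loops allowed), $H$ a simplicial complex on $V$ (contains singletons, closed under subsets); for distinct $v,w$, $v\leftrightarrow w$ means $\{v,w\}\in H$. $\mathrm{Anc}^G(Z)$: nodes with a directed path into $Z$ (including $Z$). Marginalization $G^{\mathrm{marg}\setminus U}=(V\setminus U,E',H')$: $v_1\to v_2\in E'$ iff $G$ has a directed path $v_1\to u_1\to\cdots\to u_r\to v_2$ ($r\ge0$, all $u_i\in U$); $F'\subseteq V\setminus U$ is in $H'$ iff there is $F\in H$, $F\subseteq F'\cup U$, such that each $v\in F'$ lies in $F\setminus U$ or is reached by a directed path $u_1\to\cdots\to u_r\to v$ ($r\ge1$, $u_i\in U$, $u_1\in F\cap U$). A path is a node sequence $v_1,\dots,v_n$ ($n\ge1$, repetitions allowed) with consecutive nodes joined by $\to$, $\leftarrow$ or $\leftrightarrow$. It is $Z$-blocked if $v_1\in Z$ or $v_n\in Z$, or some intermediate $v_i$ is a collider (both adjacent edges have an arrowhead at $v_i$) with $v_i\notin\mathrm{Anc}(Z)$, or some intermediate non-collider lies in $Z$. $X\perp^d Y\mid Z$ iff every path with one endnode in $X$ and the other in $Y$ is $Z$-blocked (ancestors and paths taken in the respective HEDG). *)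

theory Defs
  imports Main
begin

record 'a hedg =
  nodes :: "'a set"
  edges :: "('a \<times> 'a) set"
  hyper :: "'a set set"

definition is_hedg :: "'a hedg \<Rightarrow> bool" where
  "is_hedg G \<longleftrightarrow> finite (nodes G) \<and> edges G \<subseteq> nodes G \<times> nodes G
     \<and> (\<forall>F\<in>hyper G. F \<subseteq> nodes G)
     \<and> (\<forall>v\<in>nodes G. {v} \<in> hyper G)
     \<and> (\<forall>F\<in>hyper G. \<forall>F'. F' \<subseteq> F \<longrightarrow> F' \<in> hyper G)"

definition dpath :: "('a \<times> 'a) set \<Rightarrow> 'a list \<Rightarrow> bool" where
  "dpath E xs \<longleftrightarrow> (\<forall>i. Suc i < length xs \<longrightarrow> (xs ! i, xs ! Suc i) \<in> E)"

definition anc :: "'a hedg \<Rightarrow> 'a set \<Rightarrow> 'a set" where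
  "anc G Z = {v. \<exists>z\<in>Z. (v, z) \<in> (edges G)\<^sup>*}"

text \<open>Kinds of edges between consecutive path nodes v_i, v_(i+1):
  Fwd: v_i -> v_(i+1);  Bwd: v_i <- v_(i+1);  Bi: v_i <-> v_(i+1).\<close>
datatype ekind = Fwd | Bwd | Bi

definition edge_ok :: "'a hedg \<Rightarrow> 'a \<Rightarrow> ekind \<Rightarrow> 'a \<Rightarrow> bool" where
  "edge_ok G v k w \<longleftrightarrow> (case k of
      Fwd \<Rightarrow> (v, w) \<in> edges G
    | Bwd \<Rightarrow> (w, v) \<in> edges G
    | Bi \<Rightarrow> v \<noteq> w \<and> {v, w} \<in> hyper G)"

definition is_path :: "'a hedg \<Rightarrow> 'a list \<Rightarrow> ekind list \<Rightarrow> bool" where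
  "is_path G vs es \<longleftrightarrow> vs \<noteq> [] \<and> set vs \<subseteq> nodes G \<and> length es = length vs - 1
     \<and> (\<forall>i < length es. edge_ok G (vs ! i) (es ! i) (vs ! Suc i))"

definition head_right :: "ekind \<Rightarrow> bool" where
  "head_right k \<longleftrightarrow> k = Fwd \<or> k = Bi"
definition head_left :: "ekind \<Rightarrow> bool" where
  "head_left k \<longleftrightarrow> k = Bwd \<or> k = Bi"

text \<open>Intermediate node i (0 < i < length vs - 1) is a collider.\<close>
definition collider :: "ekind list \<Rightarrow> nat \<Rightarrow> bool" where
  "collider es i \<longleftrightarrow> head_right (es ! (i - 1)) \<and> head_left (es ! i)"

definition blocked :: "'a hedg \<Rightarrow> 'a set \<Rightarrow> 'a list \<Rightarrow> ekind list \<Rightarrow> bool" where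
  "blocked G Z vs es \<longleftrightarrow> hd vs \<in> Z \<or> last vs \<in> Z \<or>
     (\<exists>i. 0 < i \<and> Suc i < length vs \<and>
        ((collider es i \<and> vs ! i \<notin> anc G Z) \<or> (\<not> collider es i \<and> vs ! i \<in> Z)))"

definition dsep :: "'a hedg \<Rightarrow> 'a set \<Rightarrow> 'a set \<Rightarrow> 'a set \<Rightarrow> bool" where
  "dsep G X Y Z \<longleftrightarrow> (\<forall>vs es. is_path G vs es \<longrightarrow>
      ((hd vs \<in> X \<and> last vs \<in> Y) \<or> (hd vs \<in> Y \<and> last vs \<in> X)) \<longrightarrow> blocked G Z vs es)"

definition marg :: "'a hedg \<Rightarrow> 'a set \<Rightarrow> 'a hedg" where
  "marg G U = \<lparr> nodes = nodes G - U,
     edges = {(v1, v2). v1 \<in> nodes G - U \<and> v2 \<in> nodes G - U \<and>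
                (\<exists>us. set us \<subseteq> U \<and> dpath (edges G) (v1 # us @ [v2]))},
     hyper = {F'. F' \<subseteq> nodes G - U \<and> (\<exists>F\<in>hyper G. F \<subseteq> F' \<union> U \<and>
                (\<forall>v\<in>F'. v \<in> F - U \<or>
                   (\<exists>us. us \<noteq> [] \<and> set us \<subseteq> U \<and> hd us \<in> F \<inter> U \<and> dpath (edges G) (us @ [v]))))} \<rparr>"

end

theory Submission
  imports Defs
begin

text \<open>
  d-separation is a reachability property: X and Y are d-connected given Z iff some node of one
  set reaches a node of the other by a walk that may continue at each node only as the collider
  rule allows; the state of such a walk is the current node together with the information whether
  it was entered through an arrowhead. A walk of the marginal graph expands into a walk of G,
  since the hidden nodes of U on an expanded edge are non-colliders outside Z. Conversely, a
  collider in U is an ancestor of Z, and a detour to Z and back along a directed path turns it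
  into a non-collider; once no collider lies in U, the visit of a walk to U can be summarised by
  the last visible node and the kind of directed structure (forward path, backward path or
  common hyperedge) leading into U, which is exactly what an edge of the marginal graph records.
\<close>

lemma dpath_single [simp]: "dpath E [a]"
  by (simp add: dpath_def)

lemma dpath_Cons_Cons [simp]: "dpath E (a # b # xs) \<longleftrightarrow> (a, b) \<in> E \<and> dpath E (b # xs)"
  by (auto simp: dpath_def less_Suc_eq_0_disj)

lemma dpath_append: "dpath E (xs @ y # ys) \<longleftrightarrow> dpath E (xs @ [y]) \<and> dpath E (y # ys)"
  by (induction xs rule: induct_list012) auto

lemma dpath_snoc: "dpath E (xs @ [a]) \<Longrightarrow> (a, b) \<in> E \<Longrightarrow> dpath E (xs @ [a, b])"
  by (induction xs rule: induct_list012) auto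

lemma dpath_imp_rtrancl: "dpath E (a # xs) \<Longrightarrow> (a, last (a # xs)) \<in> E\<^sup>*"
  by (induction xs arbitrary: a) (auto intro: converse_rtrancl_into_rtrancl)

subsection \<open>Active walks\<close>

text \<open>
  The flag \<open>h\<close> records whether \<open>v\<close> was entered through an arrowhead. The extra set \<open>U\<close>
  forbids colliders in \<open>U\<close>; with \<open>U = {}\<close> this is the collider rule of d-separation.
\<close>

definition may_leave :: "'a hedg \<Rightarrow> 'a set \<Rightarrow> 'a set \<Rightarrow> bool \<Rightarrow> ekind \<Rightarrow> 'a \<Rightarrow> bool" where
  "may_leave G Z U h k v \<longleftrightarrow> (if h \<and> head_left k then v \<in> anc G Z \<and> v \<notin> U else v \<notin> Z)"

lemma may_leave_Fwd [simp]: "may_leave G Z U h Fwd v \<longleftrightarrow> v \<notin> Z"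
  by (simp add: may_leave_def head_left_def)

lemma may_leave_Bwd_iff_Bi: "may_leave G Z U h Bwd v \<longleftrightarrow> may_leave G Z U h Bi v"
  by (simp add: may_leave_def head_left_def)

inductive active_walk :: "'a hedg \<Rightarrow> 'a set \<Rightarrow> 'a set \<Rightarrow> 'a \<Rightarrow> 'a \<Rightarrow> bool \<Rightarrow> bool"
  for G Z U x where
  start: "x \<in> nodes G \<Longrightarrow> x \<notin> Z \<Longrightarrow> active_walk G Z U x x False"
| step: "active_walk G Z U x v h \<Longrightarrow> edge_ok G v k w \<Longrightarrow> w \<in> nodes G \<Longrightarrow> may_leave G Z U h k v
     \<Longrightarrow> active_walk G Z U x w (head_right k)"

lemma active_walk_nodes: "active_walk G Z U x v h \<Longrightarrow> v \<in> nodes G"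
  by (induction rule: active_walk.induct) auto

definition inner_open :: "'a hedg \<Rightarrow> 'a set \<Rightarrow> 'a list \<Rightarrow> ekind list \<Rightarrow> bool" where
  "inner_open G Z vs es \<longleftrightarrow> (\<forall>i. 0 < i \<and> Suc i < length vs \<longrightarrow>
     (collider es i \<longrightarrow> vs ! i \<in> anc G Z) \<and> (\<not> collider es i \<longrightarrow> vs ! i \<notin> Z))"

lemma not_blocked_iff: "\<not> blocked G Z vs es \<longleftrightarrow> hd vs \<notin> Z \<and> last vs \<notin> Z \<and> inner_open G Z vs es"
  by (auto simp: blocked_def inner_open_def)

lemma is_path_snoc:
  assumes "is_path G vs es" "edge_ok G (last vs) k w" "w \<in> nodes G"
  shows "is_path G (vs @ [w]) (es @ [k])"
  unfolding is_path_def
proof (intro conjI allI impI)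
  have ne: "vs \<noteq> []" and len: "length es = length vs - 1"
    and eo: "\<forall>i < length es. edge_ok G (vs ! i) (es ! i) (vs ! Suc i)"
    using assms(1) by (auto simp: is_path_def)
  show "set (vs @ [w]) \<subseteq> nodes G" using assms by (auto simp: is_path_def)
  show "length (es @ [k]) = length (vs @ [w]) - 1" using len ne by simp
  fix i assume "i < length (es @ [k])"
  then consider "i < length es" | "i = length es" by fastforce
  then show "edge_ok G ((vs @ [w]) ! i) ((es @ [k]) ! i) ((vs @ [w]) ! Suc i)"
  proof cases
    case 1
    then show ?thesis using eo len by (auto simp: nth_append)
  next
    case 2
    then show ?thesis using assms(2) len ne by (auto simp: nth_append last_conv_nth)
  qed
qed simp

lemma active_walk_imp_path:
  assumes "active_walk G Z U x y h"
  shows "\<exists>vs es. is_path G vs es \<and> hd vs = x \<and> last vs = y \<and> x \<notin> Z \<and> inner_open G Z vs es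
     \<and> h = (es \<noteq> [] \<and> head_right (last es))"
  using assms
proof (induction rule: active_walk.induct)
  case start
  then show ?case
    by (intro exI[of _ "[x]"] exI[of _ "[]"]) (auto simp: is_path_def inner_open_def)
next
  case (step v h k w)
  then obtain vs es where P: "is_path G vs es" "hd vs = x" "last vs = v" "x \<notin> Z"
    "inner_open G Z vs es" "h = (es \<noteq> [] \<and> head_right (last es))" by blast
  have ne: "vs \<noteq> []" and len: "length es = length vs - 1"
    using P(1) by (auto simp: is_path_def)
  have "inner_open G Z (vs @ [w]) (es @ [k])"
    unfolding inner_open_def
  proof (intro allI impI)
    fix i assume i: "0 < i \<and> Suc i < length (vs @ [w])"
    show "(collider (es @ [k]) i \<longrightarrow> (vs @ [w]) ! i \<in> anc G Z) \<and>
          (\<not> collider (es @ [k]) i \<longrightarrow> (vs @ [w]) ! i \<notin> Z)"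
    proof (cases "Suc i < length vs")
      case True
      then have "i < length es" "i - 1 < length es" using len i by auto
      then have "collider (es @ [k]) i = collider es i"
        by (simp add: collider_def nth_append)
      then show ?thesis using P(5) True i unfolding inner_open_def by (auto simp: nth_append)
    next
      case False
      then have ii: "i = length es" using i len ne by auto
      then have "last es = es ! (i - 1)" using i by (auto simp: last_conv_nth)
      then have "collider (es @ [k]) i = (h \<and> head_left k)"
        using ii P(6) i by (auto simp: collider_def nth_append)
      moreover have "(vs @ [w]) ! i = v" using ii P(3) len ne by (simp add: nth_append last_conv_nth)
      ultimately show ?thesis using step.hyps(4) by (auto simp: may_leave_def split: if_splits)
    qed
  qed
  moreover have "is_path G (vs @ [w]) (es @ [k])"
    using is_path_snoc[OF P(1)] P(3) step.hyps(2,3) by simp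
  ultimately show ?case
    using P ne by (intro exI[of _ "vs @ [w]"] exI[of _ "es @ [k]"]) auto
qed

lemma path_imp_active_walk:
  assumes "is_path G vs es" "hd vs \<notin> Z" "inner_open G Z vs es" "n < length vs"
  shows "active_walk G Z {} (hd vs) (vs ! n) (n \<noteq> 0 \<and> head_right (es ! (n - 1)))"
  using assms(4)
proof (induction n)
  case 0
  have "vs \<noteq> []" "set vs \<subseteq> nodes G" using assms(1) by (auto simp: is_path_def)
  then show ?case using assms(2) by (auto simp: hd_conv_nth intro!: start)
next
  case (Suc n)
  have len: "length es = length vs - 1" and sub: "set vs \<subseteq> nodes G"
    and eo: "\<forall>i < length es. edge_ok G (vs ! i) (es ! i) (vs ! Suc i)"
    using assms(1) by (auto simp: is_path_def)
  have "may_leave G Z {} (n \<noteq> 0 \<and> head_right (es ! (n - 1))) (es ! n) (vs ! n)"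
  proof (cases "n = 0")
    case True
    have "vs \<noteq> []" using Suc.prems by auto
    then show ?thesis using True assms(2) by (auto simp: may_leave_def hd_conv_nth)
  next
    case False
    then show ?thesis
      using assms(3) Suc.prems unfolding inner_open_def may_leave_def collider_def by auto
  qed
  then have "active_walk G Z {} (hd vs) (vs ! Suc n) (head_right (es ! n))"
    using Suc eo len sub by (intro active_walk.step) auto
  then show ?case by simp
qed

lemma dsep_iff_no_active_walk:
  "dsep G X Y Z \<longleftrightarrow>
     (\<forall>x y h. (x \<in> X \<and> y \<in> Y \<or> x \<in> Y \<and> y \<in> X) \<longrightarrow> y \<notin> Z \<longrightarrow> \<not> active_walk G Z {} x y h)"
proof
  assume d: "dsep G X Y Z"
  show "\<forall>x y h. (x \<in> X \<and> y \<in> Y \<or> x \<in> Y \<and> y \<in> X) \<longrightarrow> y \<notin> Z \<longrightarrow> \<not> active_walk G Z {} x y h"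
  proof (intro allI impI notI)
    fix x y h assume xy: "x \<in> X \<and> y \<in> Y \<or> x \<in> Y \<and> y \<in> X" "y \<notin> Z" "active_walk G Z {} x y h"
    from active_walk_imp_path[OF xy(3)] obtain vs es where P: "is_path G vs es" "hd vs = x"
      "last vs = y" "x \<notin> Z" "inner_open G Z vs es" by auto
    then have "blocked G Z vs es" using d xy(1) unfolding dsep_def by auto
    then show False using P xy(2) not_blocked_iff[of G Z vs es] by blast
  qed
next
  assume n: "\<forall>x y h. (x \<in> X \<and> y \<in> Y \<or> x \<in> Y \<and> y \<in> X) \<longrightarrow> y \<notin> Z \<longrightarrow> \<not> active_walk G Z {} x y h"
  show "dsep G X Y Z" unfolding dsep_def
  proof (intro allI impI; rule ccontr)
    fix vs es assume P: "is_path G vs es" "hd vs \<in> X \<and> last vs \<in> Y \<or> hd vs \<in> Y \<and> last vs \<in> X"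
      and "\<not> blocked G Z vs es"
    then have ok: "hd vs \<notin> Z" "last vs \<notin> Z" "inner_open G Z vs es" by (simp_all add: not_blocked_iff)
    have ne: "vs \<noteq> []" using P(1) by (auto simp: is_path_def)
    have "active_walk G Z {} (hd vs) (vs ! (length vs - 1))
            (length vs - 1 \<noteq> 0 \<and> head_right (es ! (length vs - 1 - 1)))"
      using path_imp_active_walk[OF P(1) ok(1,3), of "length vs - 1"] ne by simp
    then show False using n P(2) ok ne by (auto simp: last_conv_nth)
  qed
qed

lemma marg_simps [simp]:
  "nodes (marg G U) = nodes G - U"
  "edges (marg G U) = {(v1, v2). v1 \<in> nodes G - U \<and> v2 \<in> nodes G - U \<and>
     (\<exists>us. set us \<subseteq> U \<and> dpath (edges G) (v1 # us @ [v2]))}"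
  by (simp_all add: marg_def)

lemma anc_marg_subset: "anc (marg G U) Z \<subseteq> anc G Z"
proof
  fix v assume "v \<in> anc (marg G U) Z"
  then obtain z where z: "z \<in> Z" "(v, z) \<in> (edges (marg G U))\<^sup>*" by (auto simp: anc_def)
  have "(v, z) \<in> (edges G)\<^sup>*" using z(2)
  proof (induction rule: rtrancl_induct)
    case (step y w)
    then obtain us where "dpath (edges G) (y # us @ [w])" by auto
    from dpath_imp_rtrancl[OF this] have "(y, w) \<in> (edges G)\<^sup>*" by simp
    with step show ?case by auto
  qed simp
  with z show "v \<in> anc G Z" by (auto simp: anc_def)
qed

lemma anc_imp_anc_marg:
  assumes G: "is_hedg G" and ZU: "Z \<inter> U = {}" and ZN: "Z \<subseteq> nodes G"
    and v: "v \<in> anc G Z" "v \<notin> U" "v \<in> nodes G"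
  shows "v \<in> anc (marg G U) Z"
proof -
  have E: "edges G \<subseteq> nodes G \<times> nodes G" using G by (auto simp: is_hedg_def)
  obtain z where z: "z \<in> Z" "(v, z) \<in> (edges G)\<^sup>*" using v by (auto simp: anc_def)
  have zz: "z \<notin> U" "z \<in> nodes G" using z ZU ZN by auto
  txt \<open>Each node on a directed path to \<open>z\<close> either is visible and an ancestor of \<open>z\<close> in the
    marginal graph, or is hidden and leads through \<open>U\<close> to such a visible node.\<close>
  have "(v \<notin> U \<longrightarrow> (v, z) \<in> (edges (marg G U))\<^sup>*) \<and>
        (v \<in> U \<longrightarrow> (\<exists>us c. set us \<subseteq> U \<and> c \<in> nodes G - U \<and> dpath (edges G) (v # us @ [c])
              \<and> (c, z) \<in> (edges (marg G U))\<^sup>*))"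
    using z(2)
  proof (induction rule: converse_rtrancl_induct)
    case base
    then show ?case using zz by auto
  next
    case (step y y')
    have yy: "y \<in> nodes G" "y' \<in> nodes G" using step(1) E by auto
    obtain us c where uc: "set us \<subseteq> U" "c \<in> nodes G - U" "dpath (edges G) (y # us @ [c])"
      "(c, z) \<in> (edges (marg G U))\<^sup>*"
    proof (cases "y' \<in> U")
      case True
      then obtain us c where "set us \<subseteq> U" "c \<in> nodes G - U" "dpath (edges G) (y' # us @ [c])"
        "(c, z) \<in> (edges (marg G U))\<^sup>*" using step(3) by blast
      then show ?thesis using that[of "y' # us" c] True step(1) by simp
    next
      case False
      then show ?thesis using that[of "[]" y'] step yy by simp
    qed
    have "(y, c) \<in> edges (marg G U)" if "y \<notin> U" using that uc yy by auto
    then show ?case using uc by (auto intro: converse_rtrancl_into_rtrancl)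
  qed
  with v z show ?thesis by (auto simp: anc_def)
qed

text \<open>The nodes to which the marginal graph passes on the hyperedge \<open>F\<close>.\<close>

definition descends_via :: "('a \<times> 'a) set \<Rightarrow> 'a set \<Rightarrow> 'a set \<Rightarrow> 'a \<Rightarrow> bool" where
  "descends_via E U F u \<longleftrightarrow>
     u \<in> F \<or> (\<exists>us. us \<noteq> [] \<and> set us \<subseteq> U \<and> hd us \<in> F \<inter> U \<and> dpath E (us @ [u]))"

lemma descends_via_step:
  assumes "descends_via E U F v" "v \<in> U" "(v, w) \<in> E"
  shows "descends_via E U F w"
  using assms unfolding descends_via_def
proof (elim disjE exE conjE)
  fix us assume "us \<noteq> []" "set us \<subseteq> U" "hd us \<in> F \<inter> U" "dpath E (us @ [v])"
  then show "w \<in> F \<or> (\<exists>us. us \<noteq> [] \<and> set us \<subseteq> U \<and> hd us \<in> F \<inter> U \<and> dpath E (us @ [w]))"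
    using assms(2,3) by (intro disjI2 exI[of _ "us @ [v]"]) (auto simp: dpath_snoc)
qed (auto intro!: exI[of _ "[v]"])

lemma descends_viaE:
  assumes "descends_via E U F u"
  obtains "u \<in> F"
  | c us where "c \<in> F" "set (c # us) \<subseteq> U" "dpath E (c # us @ [u])"
  using assms unfolding descends_via_def by (auto simp: neq_Nil_conv)

lemma hyper_marg_pair_iff:
  assumes "a \<notin> U" "b \<notin> U"
  shows "{a, b} \<in> hyper (marg G U) \<longleftrightarrow> a \<in> nodes G \<and> b \<in> nodes G \<and>
     (\<exists>F\<in>hyper G. F \<subseteq> {a, b} \<union> U \<and> descends_via (edges G) U F a \<and> descends_via (edges G) U F b)"
  using assms by (auto simp: marg_def descends_via_def)

lemma hyper_pair:
  assumes "is_hedg G" "F \<in> hyper G" "a \<in> F" "b \<in> F"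
  shows "{a, b} \<in> hyper G"
  using assms by (auto simp: is_hedg_def)

lemma hyper_nodes:
  assumes "is_hedg G" "F \<in> hyper G" "a \<in> F"
  shows "a \<in> nodes G"
  using assms by (auto simp: is_hedg_def)

subsection \<open>Walks of the marginal graph expand to walks of G\<close>

lemma active_walk_dpath_fwd:
  assumes G: "is_hedg G"
  shows "active_walk G Z U x a h \<Longrightarrow> a \<notin> Z \<Longrightarrow> set us \<inter> Z = {} \<Longrightarrow>
    dpath (edges G) (a # us @ [b]) \<Longrightarrow> active_walk G Z U x b True"
proof (induction us arbitrary: a h)
  case Nil
  have "active_walk G Z U x b (head_right Fwd)"
    using Nil G by (intro active_walk.step[OF Nil(1)]) (auto simp: edge_ok_def is_hedg_def)
  then show ?case by (simp add: head_right_def)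
next
  case (Cons u us)
  have "active_walk G Z U x u (head_right Fwd)"
    using Cons G by (intro active_walk.step[OF Cons(2)]) (auto simp: edge_ok_def is_hedg_def)
  then show ?case using Cons by (auto simp: head_right_def)
qed

lemma active_walk_dpath_bwd:
  assumes G: "is_hedg G"
  shows "active_walk G Z U x a h \<Longrightarrow> may_leave G Z U h Bwd a \<Longrightarrow> set us \<inter> Z = {} \<Longrightarrow>
    dpath (edges G) (b # us @ [a]) \<Longrightarrow> active_walk G Z U x b False"
proof (induction us arbitrary: a h rule: rev_induct)
  case Nil
  have "active_walk G Z U x b (head_right Bwd)"
    using Nil G by (intro active_walk.step[OF Nil(1)]) (auto simp: edge_ok_def is_hedg_def)
  then show ?case by (simp add: head_right_def)
next
  case (snoc u us)
  have d: "dpath (edges G) (b # us @ [u])" "(u, a) \<in> edges G"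
    using snoc(5) dpath_append[of "edges G" "b # us" u "[a]"] by auto
  have "active_walk G Z U x u (head_right Bwd)"
    using snoc d G by (intro active_walk.step[OF snoc(2)]) (auto simp: edge_ok_def is_hedg_def)
  then show ?case
    using snoc d by (auto simp: head_right_def may_leave_def head_left_def)
qed

lemma active_walk_through_hidden_hyperedge:
  assumes G: "is_hedg G" and ZU: "Z \<inter> U = {}"
    and walk: "active_walk G Z {} x v h" and leave: "may_leave G Z {} h Bi v"
    and vw: "v \<noteq> w" "v \<notin> U" "w \<notin> U" and F: "F \<in> hyper G"
    and desc: "descends_via (edges G) U F v" "descends_via (edges G) U F w"
  shows "active_walk G Z {} x w True"
proof -
  txt \<open>First walk back from \<open>v\<close> to a node \<open>c\<close> of \<open>F\<close> from which \<open>w\<close> can be approached.\<close>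
  obtain c h' where c: "c \<in> F" "active_walk G Z {} x c h'" "c = v \<or> c \<in> U"
    "may_leave G Z {} h' Bi c"
    using desc(1)
  proof (cases rule: descends_viaE)
    case 1
    then show ?thesis using that walk leave by blast
  next
    case (2 c us)
    have "active_walk G Z {} x c False"
      using 2 ZU by (intro active_walk_dpath_bwd[OF G walk]) (auto simp: may_leave_Bwd_iff_Bi leave)
    then show ?thesis using that[of c False] 2 ZU by (auto simp: may_leave_def)
  qed
  have hop: "active_walk G Z {} x d True" if "d \<in> F" "d \<noteq> c" for d
  proof -
    have "active_walk G Z {} x d (head_right Bi)"
      using c that hyper_pair[OF G F c(1) that(1)] hyper_nodes[OF G F that(1)]
      by (intro active_walk.step[OF c(2)]) (auto simp: edge_ok_def)
    then show ?thesis by (simp add: head_right_def)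
  qed
  show ?thesis
    using desc(2)
  proof (cases rule: descends_viaE)
    case 1
    then show ?thesis using hop c(3) vw by auto
  next
    case (2 c2 us)
    obtain h2 where "active_walk G Z {} x c2 h2"
      using hop c(2) 2 by (cases "c2 = c") auto
    then show ?thesis
      using 2 ZU by (intro active_walk_dpath_fwd[OF G]) auto
  qed
qed

lemma active_walk_marg_imp_active_walk:
  assumes G: "is_hedg G" and ZU: "Z \<inter> U = {}"
  shows "active_walk (marg G U) Z {} x y h \<Longrightarrow> active_walk G Z {} x y h"
proof (induction rule: active_walk.induct)
  case start
  then show ?case by (auto intro: active_walk.start)
next
  case (step v h k w)
  have leave: "may_leave G Z {} h k v"
    using step.hyps(4) anc_marg_subset[of G U Z] by (auto simp: may_leave_def)
  have vw: "v \<notin> U" "w \<notin> U"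
    using step.hyps(3) active_walk_nodes[OF step.hyps(1)] by auto
  show ?case
  proof (cases k)
    case Fwd
    then obtain us where "set us \<subseteq> U" "dpath (edges G) (v # us @ [w])"
      using step.hyps(2) by (auto simp: edge_ok_def)
    moreover have "v \<notin> Z" using leave Fwd by simp
    ultimately have "active_walk G Z {} x w True"
      using ZU by (intro active_walk_dpath_fwd[OF G step.IH]) auto
    then show ?thesis using Fwd by (simp add: head_right_def)
  next
    case Bwd
    then obtain us where "set us \<subseteq> U" "dpath (edges G) (w # us @ [v])"
      using step.hyps(2) by (auto simp: edge_ok_def)
    then have "active_walk G Z {} x w False"
      using ZU leave Bwd by (intro active_walk_dpath_bwd[OF G step.IH]) auto
    then show ?thesis using Bwd by (simp add: head_right_def)
  next
    case Bi
    then have "v \<noteq> w" "{v, w} \<in> hyper (marg G U)"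
      using step.hyps(2) by (auto simp: edge_ok_def)
    then obtain F where "F \<in> hyper G" "descends_via (edges G) U F v" "descends_via (edges G) U F w"
      using hyper_marg_pair_iff[OF vw] by blast
    then have "active_walk G Z {} x w True"
      using leave Bi \<open>v \<noteq> w\<close> vw by (intro active_walk_through_hidden_hyperedge[OF G ZU step.IH]) auto
    then show ?thesis using Bi by (simp add: head_right_def)
  qed
qed

subsection \<open>Removing colliders in the hidden set\<close>

lemma active_walk_detour_to_anc:
  assumes G: "is_hedg G" and ZU: "Z \<inter> U = {}"
  shows "(v, z) \<in> (edges G)\<^sup>* \<Longrightarrow> z \<in> Z \<Longrightarrow> active_walk G Z U x v h \<Longrightarrow> v \<in> U
     \<Longrightarrow> active_walk G Z U x v False"
proof (induction arbitrary: h rule: converse_rtrancl_induct)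
  case base
  then show ?case using ZU by auto
next
  case (step v v')
  have nodes: "v \<in> nodes G" "v' \<in> nodes G" using step(1) G by (auto simp: is_hedg_def)
  have "v \<notin> Z" using step.prems(3) ZU by auto
  then have "active_walk G Z U x v' (head_right Fwd)"
    using step nodes by (intro active_walk.step[OF step.prems(2)]) (auto simp: edge_ok_def)
  then have fwd: "active_walk G Z U x v' True" by (simp add: head_right_def)
  txt \<open>Return to \<open>v\<close> along the same edge: \<open>v'\<close> is either a collider outside \<open>U\<close> that is an
    ancestor of \<open>Z\<close>, or a hidden node that the induction hypothesis lets us enter without arrowhead.\<close>
  obtain h' where "active_walk G Z U x v' h'" "may_leave G Z U h' Bwd v'"
  proof (cases "v' \<in> U")
    case True
    then show ?thesis using that[of False] step.IH[OF step.prems(1) fwd] ZU by (auto simp: may_leave_def)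
  next
    case False
    have "v' \<in> anc G Z" using step(2) step.prems(1) by (auto simp: anc_def)
    then show ?thesis using that[of True] fwd False by (auto simp: may_leave_def head_left_def)
  qed
  then have "active_walk G Z U x v (head_right Bwd)"
    using step(1) nodes by (intro active_walk.step) (auto simp: edge_ok_def)
  then show ?case by (simp add: head_right_def)
qed

lemma active_walk_avoid_hidden_colliders:
  assumes G: "is_hedg G" and ZU: "Z \<inter> U = {}"
  shows "active_walk G Z {} x v h \<Longrightarrow> active_walk G Z U x v h"
proof (induction rule: active_walk.induct)
  case start
  then show ?case by (rule active_walk.start)
next
  case (step v h k w)
  show ?case
  proof (cases "h \<and> head_left k \<and> v \<in> U")
    case False
    then show ?thesis using step by (auto intro!: active_walk.step simp: may_leave_def)
  next
    case True
    then obtain z where z: "z \<in> Z" "(v, z) \<in> (edges G)\<^sup>*"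
      using step.hyps(4) by (auto simp: may_leave_def anc_def)
    have "active_walk G Z U x v False"
      using active_walk_detour_to_anc[OF G ZU z(2) z(1) step.IH] True by simp
    moreover have "v \<notin> Z" using True ZU by auto
    ultimately show ?thesis using step by (auto intro!: active_walk.step simp: may_leave_def)
  qed
qed

subsection \<open>Walks of G contract to walks of the marginal graph\<close>

locale marg_simulation =
  fixes G :: "'a hedg" and Z U :: "'a set" and x :: 'a
  assumes G: "is_hedg G" and ZU: "Z \<inter> U = {}" and ZN: "Z \<subseteq> nodes G" and xU: "x \<notin> U"
begin

abbreviation Gm :: "'a hedg" where
  "Gm \<equiv> marg G U"

text \<open>
  The simulation invariant for a state \<open>(v, h)\<close> of an active walk of G whose colliders avoid \<open>U\<close>.
  A visible \<open>v\<close> is \<open>covered\<close>: it is reached in \<open>Gm\<close> in a state allowing at least the same exits.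
  A hidden \<open>v\<close> is pending behind the last visible node \<open>a\<close>, reached in \<open>Gm\<close>, in one of three ways:
  on a directed path \<open>a \<rightarrow> \<dots> \<rightarrow> v\<close> through \<open>U\<close> (entered with arrowhead), on a directed path
  \<open>v \<rightarrow> \<dots> \<rightarrow> a\<close> through \<open>U\<close> (entered without), or below a hyperedge \<open>F \<subseteq> {a} \<union> U\<close> that \<open>a\<close>
  inherits. In each case the next visible node becomes adjacent to \<open>a\<close> in \<open>Gm\<close>.
\<close>

definition covered :: "'a \<Rightarrow> bool \<Rightarrow> bool" where
  "covered v h \<longleftrightarrow>
     (\<exists>h'. active_walk Gm Z {} x v h' \<and> (\<forall>k. may_leave G Z U h k v \<longrightarrow> may_leave Gm Z {} h' k v))"

definition pending_fwd :: "'a \<Rightarrow> bool" where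
  "pending_fwd v \<longleftrightarrow> (\<exists>a ha us. a \<notin> U \<and> active_walk Gm Z {} x a ha \<and> may_leave Gm Z {} ha Fwd a \<and>
      set us \<subseteq> U \<and> dpath (edges G) (a # us @ [v]))"

definition pending_bwd :: "'a \<Rightarrow> bool" where
  "pending_bwd v \<longleftrightarrow> (\<exists>a ha us. a \<notin> U \<and> active_walk Gm Z {} x a ha \<and> may_leave Gm Z {} ha Bi a \<and>
      set us \<subseteq> U \<and> dpath (edges G) (v # us @ [a]))"

definition pending_hyper :: "'a \<Rightarrow> bool" where
  "pending_hyper v \<longleftrightarrow> (\<exists>a ha F. a \<notin> U \<and> active_walk Gm Z {} x a ha \<and> may_leave Gm Z {} ha Bi a \<and>
      F \<in> hyper G \<and> F \<subseteq> insert a U \<and> descends_via (edges G) U F a \<and> descends_via (edges G) U F v)"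

definition simulated :: "'a \<Rightarrow> bool \<Rightarrow> bool" where
  "simulated v h \<longleftrightarrow> (v \<notin> U \<longrightarrow> covered v h) \<and>
     (v \<in> U \<longrightarrow> h \<and> pending_fwd v \<or> \<not> h \<and> pending_bwd v \<or> h \<and> pending_hyper v)"

lemma active_walk_Gm_nodes: "active_walk Gm Z {} x a ha \<Longrightarrow> a \<in> nodes G \<and> a \<notin> U"
  using active_walk_nodes[of Gm Z "{}" x a ha] by simp

lemma covered_if_active_walk_Gm:
  assumes "active_walk Gm Z {} x v h"
  shows "covered v h"
proof -
  have "may_leave Gm Z {} h k v" if "may_leave G Z U h k v" for k
    using that active_walk_Gm_nodes[OF assms] anc_imp_anc_marg[OF G ZU ZN] by (auto simp: may_leave_def)
  with assms show ?thesis unfolding covered_def by blast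
qed

lemma simulated_visible:
  "active_walk Gm Z {} x w h \<Longrightarrow> w \<notin> U \<Longrightarrow> simulated w h"
  using covered_if_active_walk_Gm unfolding simulated_def by blast

lemma edge_Gm_Fwd:
  "a \<in> nodes G - U \<Longrightarrow> w \<in> nodes G - U \<Longrightarrow> set us \<subseteq> U \<Longrightarrow> dpath (edges G) (a # us @ [w])
   \<Longrightarrow> edge_ok Gm a Fwd w"
  by (auto simp: edge_ok_def)

lemma edge_Gm_Bwd:
  "a \<in> nodes G - U \<Longrightarrow> w \<in> nodes G - U \<Longrightarrow> set us \<subseteq> U \<Longrightarrow> dpath (edges G) (w # us @ [a])
   \<Longrightarrow> edge_ok Gm a Bwd w"
  by (auto simp: edge_ok_def)

lemma edge_Gm_Bi:
  assumes "a \<noteq> w" "a \<in> nodes G - U" "w \<in> nodes G - U" "F \<in> hyper G" "F \<subseteq> {a, w} \<union> U"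
    "descends_via (edges G) U F a" "descends_via (edges G) U F w"
  shows "edge_ok Gm a Bi w"
  using assms hyper_marg_pair_iff[of a U w G] by (auto simp: edge_ok_def)

lemma covered_by_hyperedge:
  assumes walk: "active_walk Gm Z {} x a ha" and leave: "may_leave Gm Z {} ha Bi a"
    and b: "b \<in> nodes G - U"
    and F: "F \<in> hyper G" "F \<subseteq> {a, b} \<union> U" "descends_via (edges G) U F a" "descends_via (edges G) U F b"
  shows "covered b True"
proof (cases "a = b")
  case True
  have "may_leave Gm Z {} ha k b" if "may_leave G Z U True k b" for k
    using that leave True by (cases k) (auto simp: may_leave_def head_left_def)
  then show ?thesis using walk True unfolding covered_def by blast
next
  case False
  have "edge_ok Gm a Bi b"
    using False active_walk_Gm_nodes[OF walk] b F by (intro edge_Gm_Bi) auto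
  then have "active_walk Gm Z {} x b (head_right Bi)"
    using b by (intro active_walk.step[OF walk _ _ leave]) auto
  then show ?thesis using covered_if_active_walk_Gm by (simp add: head_right_def)
qed

lemma simulated_step_covered:
  assumes cov: "covered v h" and v: "v \<notin> U" and e: "edge_ok G v k w" and w: "w \<in> nodes G"
    and leave: "may_leave G Z U h k v"
  shows "simulated w (head_right k)"
proof -
  obtain h' where walk: "active_walk Gm Z {} x v h'" and leave': "may_leave Gm Z {} h' k v"
    using cov leave unfolding covered_def by blast
  have vn: "v \<in> nodes G" using active_walk_Gm_nodes[OF walk] by simp
  show ?thesis
  proof (cases "w \<in> U")
    case False
    have "edge_ok Gm v k w"
    proof (cases k)
      case Bi
      have "edge_ok Gm v Bi w"
        by (rule edge_Gm_Bi[where F = "{v, w}"])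
          (use e Bi v False vn w in \<open>auto simp: edge_ok_def descends_via_def\<close>)
      with Bi show ?thesis by simp
    qed (use e v False vn w in \<open>auto simp: edge_ok_def intro!: exI[of _ "[]"]\<close>)
    then have "active_walk Gm Z {} x w (head_right k)"
      using False w by (intro active_walk.step[OF walk _ _ leave']) auto
    then show ?thesis using simulated_visible False by blast
  next
    case True
    have "pending_fwd w" if "k = Fwd"
      unfolding pending_fwd_def using v walk leave' that e by (auto simp: edge_ok_def intro!: exI[of _ "[]"])
    moreover have "pending_bwd w" if "k = Bwd"
      unfolding pending_bwd_def using v walk leave' that e
      by (intro exI[of _ v] exI[of _ h'] exI[of _ "[]"]) (auto simp: edge_ok_def may_leave_Bwd_iff_Bi)
    moreover have "pending_hyper w" if "k = Bi"
      unfolding pending_hyper_def using v walk leave' that e True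
      by (intro exI[of _ v] exI[of _ h'] exI[of _ "{v, w}"]) (auto simp: edge_ok_def descends_via_def)
    ultimately show ?thesis using True unfolding simulated_def by (cases k) (auto simp: head_right_def)
  qed
qed

lemma simulated_step_fwd:
  assumes pend: "pending_fwd v" and v: "v \<in> U" and e: "edge_ok G v k w" and w: "w \<in> nodes G"
    and leave: "may_leave G Z U True k v"
  shows "simulated w (head_right k)"
proof -
  have k: "k = Fwd" using leave v by (cases k) (auto simp: may_leave_def head_left_def)
  then have vw: "(v, w) \<in> edges G" using e by (simp add: edge_ok_def)
  obtain a ha us where A: "a \<notin> U" "active_walk Gm Z {} x a ha" "may_leave Gm Z {} ha Fwd a"
      "set us \<subseteq> U" "dpath (edges G) (a # us @ [v])" using pend unfolding pending_fwd_def by blast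
  have d: "dpath (edges G) (a # (us @ [v]) @ [w])" using dpath_snoc[of _ "a # us" v w] A(5) vw by simp
  have an: "a \<in> nodes G" using active_walk_Gm_nodes[OF A(2)] by simp
  show ?thesis
  proof (cases "w \<in> U")
    case False
    have "edge_ok Gm a Fwd w" using A(1,4) v d an w False by (intro edge_Gm_Fwd[of a w "us @ [v]"]) auto
    then have "active_walk Gm Z {} x w (head_right Fwd)"
      using False w by (intro active_walk.step[OF A(2) _ _ A(3)]) auto
    then show ?thesis using simulated_visible False k by blast
  next
    case True
    have "pending_fwd w" unfolding pending_fwd_def
      using A d v by (intro exI[of _ a] exI[of _ ha] exI[of _ "us @ [v]"]) auto
    then show ?thesis using True k unfolding simulated_def by (simp add: head_right_def)
  qed
qed

lemma simulated_step_bwd: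
  assumes pend: "pending_bwd v" and v: "v \<in> U" and e: "edge_ok G v k w" and w: "w \<in> nodes G"
  shows "simulated w (head_right k)"
proof -
  obtain a ha us where B: "a \<notin> U" "active_walk Gm Z {} x a ha" "may_leave Gm Z {} ha Bi a"
      "set us \<subseteq> U" "dpath (edges G) (v # us @ [a])" using pend unfolding pending_bwd_def by blast
  have an: "a \<in> nodes G" using active_walk_Gm_nodes[OF B(2)] by simp
  have vn: "v \<in> nodes G" using G v B(5) by (cases us) (auto simp: is_hedg_def)
  have desc_a: "descends_via (edges G) U F a" if "v \<in> F" for F
    unfolding descends_via_def using B(4,5) v that by (intro disjI2 exI[of _ "v # us"]) auto
  txt \<open>After a step out of \<open>v\<close> away from \<open>a\<close>, the hyperedge \<open>{v}\<close> or \<open>{v, w}\<close> is inherited by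
    \<open>a\<close> and by everything below \<open>w\<close>.\<close>
  have hyper_case: "simulated w True"
    if F: "F \<in> hyper G" "v \<in> F" "F \<subseteq> insert w U" and desc_w: "descends_via (edges G) U F w" for F
  proof (cases "w \<in> U")
    case False
    have "covered w True"
      using F B w False desc_a[OF F(2)] desc_w by (intro covered_by_hyperedge[OF B(2) B(3)]) auto
    then show ?thesis using False unfolding simulated_def by simp
  next
    case True
    have "pending_hyper w" unfolding pending_hyper_def
      using B F desc_a[OF F(2)] desc_w True by (intro exI[of _ a] exI[of _ ha] exI[of _ F]) auto
    then show ?thesis using True unfolding simulated_def by simp
  qed
  show ?thesis
  proof (cases k)
    case Bwd
    then have d: "dpath (edges G) (w # (v # us) @ [a])" using e B(5) by (simp add: edge_ok_def)
    show ?thesis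
    proof (cases "w \<in> U")
      case False
      have "edge_ok Gm a Bwd w" using B(1,4) v d an w False by (intro edge_Gm_Bwd[of a w "v # us"]) auto
      then have "active_walk Gm Z {} x w (head_right Bwd)"
        using False w B(3) by (intro active_walk.step[OF B(2)]) (auto simp: may_leave_Bwd_iff_Bi)
      then show ?thesis using simulated_visible False Bwd by blast
    next
      case True
      have "pending_bwd w" unfolding pending_bwd_def
        using B d v by (intro exI[of _ a] exI[of _ ha] exI[of _ "v # us"]) auto
      then show ?thesis using True Bwd unfolding simulated_def by (simp add: head_right_def)
    qed
  next
    case Fwd
    have "{v} \<in> hyper G" using G vn by (auto simp: is_hedg_def)
    moreover have "descends_via (edges G) U {v} w"
      unfolding descends_via_def using v e Fwd by (intro disjI2 exI[of _ "[v]"]) (auto simp: edge_ok_def)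
    ultimately show ?thesis using hyper_case[of "{v}"] v Fwd by (simp add: head_right_def)
  next
    case Bi
    then have "{v, w} \<in> hyper G" using e by (auto simp: edge_ok_def)
    then show ?thesis using hyper_case[of "{v, w}"] v Bi by (simp add: head_right_def descends_via_def)
  qed
qed

lemma simulated_step_hyper:
  assumes pend: "pending_hyper v" and v: "v \<in> U" and e: "edge_ok G v k w" and w: "w \<in> nodes G"
    and leave: "may_leave G Z U True k v"
  shows "simulated w (head_right k)"
proof -
  have k: "k = Fwd" using leave v by (cases k) (auto simp: may_leave_def head_left_def)
  obtain a ha F where C: "a \<notin> U" "active_walk Gm Z {} x a ha" "may_leave Gm Z {} ha Bi a"
      "F \<in> hyper G" "F \<subseteq> insert a U" "descends_via (edges G) U F a" "descends_via (edges G) U F v"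
    using pend unfolding pending_hyper_def by blast
  have desc_w: "descends_via (edges G) U F w"
    using descends_via_step[OF C(7) v] e k by (simp add: edge_ok_def)
  show ?thesis
  proof (cases "w \<in> U")
    case False
    have "covered w True" using C desc_w False w by (intro covered_by_hyperedge[OF C(2) C(3)]) auto
    then show ?thesis using False k unfolding simulated_def by (simp add: head_right_def)
  next
    case True
    have "pending_hyper w" unfolding pending_hyper_def using C desc_w by blast
    then show ?thesis using True k unfolding simulated_def by (simp add: head_right_def)
  qed
qed

lemma simulated_if_active_walk: "active_walk G Z U x v h \<Longrightarrow> simulated v h"
proof (induction rule: active_walk.induct)
  case start
  then have "active_walk Gm Z {} x x False" using xU by (intro active_walk.start) auto
  then show ?case using simulated_visible xU by blast
next
  case (step v h k w)
  show ?case
  proof (cases "v \<in> U")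
    case False
    then show ?thesis using simulated_step_covered step unfolding simulated_def by blast
  next
    case True
    then have "h \<and> pending_fwd v \<or> \<not> h \<and> pending_bwd v \<or> h \<and> pending_hyper v"
      using step.IH unfolding simulated_def by blast
    then show ?thesis
      using simulated_step_fwd[OF _ True step.hyps(2,3)] simulated_step_bwd[OF _ True step.hyps(2,3)]
        simulated_step_hyper[OF _ True step.hyps(2,3)] step.hyps(4) by auto
  qed
qed

end

lemma active_walk_marg_iff:
  assumes G: "is_hedg G" and ZN: "Z \<subseteq> nodes G" and ZU: "Z \<inter> U = {}" and "x \<notin> U" "y \<notin> U"
  shows "(\<exists>h. active_walk (marg G U) Z {} x y h) \<longleftrightarrow> (\<exists>h. active_walk G Z {} x y h)"
proof
  interpret marg_simulation G Z U x
    using assms by unfold_locales auto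
  assume "\<exists>h. active_walk G Z {} x y h"
  then obtain h where "active_walk G Z U x y h"
    using active_walk_avoid_hidden_colliders[OF G ZU] by blast
  then show "\<exists>h. active_walk (marg G U) Z {} x y h"
    using simulated_if_active_walk \<open>y \<notin> U\<close> unfolding simulated_def covered_def by blast
qed (use active_walk_marg_imp_active_walk[OF G ZU] in blast)

theorem mainTheorem18:
  fixes G :: "'a hedg" and X Y Z U :: "'a set"
  assumes "is_hedg G"
    and "X \<subseteq> nodes G" and "Y \<subseteq> nodes G" and "Z \<subseteq> nodes G" and "U \<subseteq> nodes G"
    and "U \<inter> (X \<union> Y \<union> Z) = {}"
  shows "dsep G X Y Z \<longleftrightarrow> dsep (marg G U) X Y Z"
proof -
  have "(\<exists>h. active_walk (marg G U) Z {} x y h) \<longleftrightarrow> (\<exists>h. active_walk G Z {} x y h)"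
    if "x \<in> X \<union> Y" "y \<in> X \<union> Y" for x y
    using active_walk_marg_iff[OF assms(1,4)] that assms(6) by blast
  then show ?thesis unfolding dsep_iff_no_active_walk by blast
qed

end
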